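(* Let $R$ be an integral domain; if $R=\bigoplus_{i\ge0}[R]_i$ is graded, assume $[R]_1\neq0$. Let $A=\begin{pmatrix}a&\mathfrak b\\ \mathfrak c&A'\end{pmatrix}\in R^{n,n}$ with $a\in R$, $\mathfrak b$ a row vector and $\mathfrak c$ a column vector in $R^{n-1}$, and $A'\in R^{n-1,n-1}$. If $\det A$, $\det A'$, $\mathfrak b$ and $\mathfrak c$ are all non-zero, then $A$ is linked to a block diagonal matrix $\begin{pmatrix}b&0\\0&B'\end{pmatrix}$ with $b\in R$, $B'\in R^{n-1,n-1}$. If $R$ is graded and $A$ is homogeneous, this block diagonal matrix can be taken homogeneous.
   Context: $R^{n,n}$ denotes the $n\times n$ matrices over $R$ and $B^t$ the transpose. Two matrices are equivalent if one equals $PAQ$ with $P,Q$ invertible. Matrices $A,B\in R^{n,n}$ are linked in one step if $A\cdot B^t$ is equivalent to a symmetric matrix whose determinant is a non-zero divisor of $R$; $A,B$ are linked if there is a chain $A=A_0,A_1,\dots,A_v=B$ with $A_i$ linked in one step to $A_{i+1}$ for all $i$, where in the graded case all $A_i$ are required to be homogeneous, i.e. to represent degree-preserving homomorphisms between graded free $R$-modules. *)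

theory Defs
  imports "Jordan_Normal_Form.Determinant"
begin

definition non_zero_divisor :: "'a::comm_ring_1 \<Rightarrow> bool" where
  "non_zero_divisor d \<longleftrightarrow> (\<forall>x. d * x = 0 \<longrightarrow> x = 0)"

definition mat_equiv :: "nat \<Rightarrow> 'a::comm_ring_1 mat \<Rightarrow> 'a mat \<Rightarrow> bool" where
  "mat_equiv n A B \<longleftrightarrow> (\<exists>P Q. P \<in> carrier_mat n n \<and> Q \<in> carrier_mat n n \<and>
      invertible_mat P \<and> invertible_mat Q \<and> B = P * A * Q)"

definition linked_one_step :: "nat \<Rightarrow> 'a::comm_ring_1 mat \<Rightarrow> 'a mat \<Rightarrow> bool" where
  "linked_one_step n A B \<longleftrightarrow> A \<in> carrier_mat n n \<and> B \<in> carrier_mat n n \<and>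
     (\<exists>S. S \<in> carrier_mat n n \<and> transpose_mat S = S \<and> non_zero_divisor (det S) \<and>
          mat_equiv n (A * transpose_mat B) S)"

text \<open>Linked via a chain A = A_0, ..., A_v = B all of whose members satisfy P
  (P = (\<lambda>_. True) in the ungraded case, homogeneity in the graded case).\<close>
definition linked_by :: "('a::comm_ring_1 mat \<Rightarrow> bool) \<Rightarrow> nat \<Rightarrow> 'a mat \<Rightarrow> 'a mat \<Rightarrow> bool" where
  "linked_by P n A B \<longleftrightarrow> (\<exists>xs. xs \<noteq> [] \<and> hd xs = A \<and> last xs = B \<and> (\<forall>X\<in>set xs. P X) \<and>
      (\<forall>i. Suc i < length xs \<longrightarrow> linked_one_step n (xs ! i) (xs ! Suc i)))"

abbreviation linked :: "nat \<Rightarrow> 'a::comm_ring_1 mat \<Rightarrow> 'a mat \<Rightarrow> bool" where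
  "linked \<equiv> linked_by (\<lambda>_. True)"

definition grading :: "(nat \<Rightarrow> 'a::comm_ring_1 set) \<Rightarrow> bool" where
  "grading G \<longleftrightarrow>
     (\<forall>i. 0 \<in> G i \<and> (\<forall>x\<in>G i. \<forall>y\<in>G i. x + y \<in> G i \<and> - x \<in> G i)) \<and>
     (\<forall>i j. \<forall>x\<in>G i. \<forall>y\<in>G j. x * y \<in> G (i + j)) \<and>
     (\<forall>x. \<exists>!f. (\<forall>i. f i \<in> G i) \<and> finite {i. f i \<noteq> 0} \<and> x = (\<Sum>i\<in>{i. f i \<noteq> 0}. f i))"

definition hcomp :: "(nat \<Rightarrow> 'a::comm_ring_1 set) \<Rightarrow> int \<Rightarrow> 'a set" where
  "hcomp G d = (if d < 0 then {0} else G (nat d))"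

text \<open>A matrix is homogeneous if it represents a degree-preserving homomorphism
  \<Oplus>_j R(-e_j) \<rightarrow> \<Oplus>_i R(-d_i) of graded free modules, i.e. entry (i,j) is
  homogeneous of degree e_j - d_i.\<close>
definition homogeneous_mat :: "(nat \<Rightarrow> 'a::comm_ring_1 set) \<Rightarrow> 'a mat \<Rightarrow> bool" where
  "homogeneous_mat G A \<longleftrightarrow> (\<exists>d e :: nat \<Rightarrow> int.
      \<forall>i < dim_row A. \<forall>j < dim_col A. A $$ (i, j) \<in> hcomp G (e j - d i))"

definition block_mat :: "'a::comm_ring_1 \<Rightarrow> 'a vec \<Rightarrow> 'a vec \<Rightarrow> 'a mat \<Rightarrow> 'a mat" where
  "block_mat a b c A' = four_block_mat (mat 1 1 (\<lambda>_. a)) (mat 1 (dim_vec b) (\<lambda>(i, j). b $ j))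
      (mat (dim_vec c) 1 (\<lambda>(i, j). c $ i)) A'"

end

theory Submission
  imports Defs
begin

(*
  Right multiplication by a symmetric matrix S with non-zero determinant is a one-step link,
  because A (A S)^T = A S A^T is symmetric. Hence scaling a column by a non-zero element is a
  link, and so is adding a multiple of one column to another (through a column swap).

  Put u = adj(A') c. Replacing the first column of A by det A' times itself minus the
  combination of the other columns with coefficients u kills c, since A' u = det A' c. The
  corner entry becomes s = det A' a - b u, and s is non-zero because the determinant stays
  non-zero. Scaling the other columns by s and subtracting b_k times the first column from
  column k + 1 then kills b and leaves diag(s, s A').

  All multipliers are homogeneous (det A' and the entries of u by the cofactor expansion), so
  in the graded case each column operation only shifts the column degrees and every
  intermediate matrix stays homogeneous.
*)

section \<open>Linking by column operations\<close>

lemma invertible_mat_one: "invertible_mat (1\<^sub>m n :: 'a::semiring_1 mat)"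
  unfolding invertible_mat_def inverts_mat_def by (intro conjI exI[of _ "1\<^sub>m n"]) auto

lemma linked_one_step_mult_symmetric:
  fixes A S :: "'a::idom mat"
  assumes A: "A \<in> carrier_mat n n" and S: "S \<in> carrier_mat n n"
    and S_sym: "transpose_mat S = S" and dA: "det A \<noteq> 0" and dS: "det S \<noteq> 0"
  shows "linked_one_step n A (A * S)"
proof -
  let ?M = "A * transpose_mat (A * S)"
  have M_eq: "?M = A * (S * transpose_mat A)"
    using transpose_mult[OF A S] S_sym by simp
  have M: "?M \<in> carrier_mat n n" using A S by simp
  have "transpose_mat ?M = ?M"
    unfolding M_eq using A S S_sym
    by (simp add: transpose_mult[of _ n n _ n] assoc_mult_mat[of _ n n _ n _ n])
  moreover have "det ?M = det A * (det A * det S)"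
    unfolding M_eq using A S by (simp add: det_mult[of _ n] det_transpose)
  ultimately show ?thesis
    unfolding linked_one_step_def mat_equiv_def non_zero_divisor_def using A S M dA dS
    by (intro conjI exI[of _ ?M] exI[of _ "1\<^sub>m n"]) (auto simp: invertible_mat_one)
qed

lemma linked_one_step_multcol:
  fixes A :: "'a::idom mat"
  assumes A: "A \<in> carrier_mat n n" and dA: "det A \<noteq> 0" and k: "k < n" and s: "s \<noteq> 0"
  shows "linked_one_step n A (multcol k s A)"
  unfolding multcol_mat[OF A]
  using A dA k s by (intro linked_one_step_mult_symmetric) (auto simp: det_multrow_mat)

lemma linked_one_step_swapcols:
  fixes A :: "'a::idom mat"
  assumes A: "A \<in> carrier_mat n n" and dA: "det A \<noteq> 0" and jk: "j < n" "k < n" "j \<noteq> k"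
  shows "linked_one_step n A (swapcols j k A)"
  unfolding swapcols_mat[OF A jk(1,2)]
  using A dA jk by (intro linked_one_step_mult_symmetric) (auto simp: det_swaprows_mat)

lemma det_multcol:
  assumes A: "A \<in> carrier_mat n n" and k: "k < n"
  shows "det (multcol k s A) = s * det A"
  using A k by (simp add: multcol_mat det_mult[of A n] det_multrow_mat)

(* The elementary matrix of addcol is not symmetric, but becomes symmetric after a column swap. *)
lemma linked_one_step_addcol_swapcols:
  fixes A :: "'a::idom mat"
  assumes A: "A \<in> carrier_mat n n" and dA: "det A \<noteq> 0" and jk: "j < n" "k < n" "j \<noteq> k"
  shows "linked_one_step n A (swapcols j k (addcol t k j A))"
proof -
  let ?S = "swapcols j k (addrow_mat n t j k)"
  have S: "?S \<in> carrier_mat n n" by simp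
  have "swapcols j k (addcol t k j A) = A * ?S"
  proof -
    have "swapcols j k (addcol t k j A) = A * addrow_mat n t j k * swaprows_mat n j k"
      using A jk by (simp add: addcol_mat swapcols_mat[of _ n n])
    also have "\<dots> = A * ?S"
      using A jk by (simp add: swapcols_mat[of _ n n] assoc_mult_mat[of A n n _ n _ n])
    finally show ?thesis .
  qed
  moreover have "transpose_mat ?S = ?S"
    using jk by (intro eq_matI) auto
  moreover have "det ?S \<noteq> 0"
    using jk by (simp add: det_swapcols det_addrow_mat)
  ultimately show ?thesis
    using A dA S by (simp add: linked_one_step_mult_symmetric)
qed

lemma linked_by_refl: "P A \<Longrightarrow> linked_by P n A A"
  unfolding linked_by_def by (intro exI[of _ "[A]"]) auto

lemma linked_by_snoc:
  assumes AB: "linked_by P n A B" and BC: "linked_one_step n B C" and PC: "P C"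
  shows "linked_by P n A C"
proof -
  obtain xs where xs: "xs \<noteq> []" "hd xs = A" "last xs = B" "\<forall>X\<in>set xs. P X"
    and steps: "\<And>i. Suc i < length xs \<Longrightarrow> linked_one_step n (xs ! i) (xs ! Suc i)"
    using AB unfolding linked_by_def by blast
  have "linked_one_step n ((xs @ [C]) ! i) ((xs @ [C]) ! Suc i)"
    if "Suc i < length (xs @ [C])" for i
  proof (cases "Suc i < length xs")
    case True
    then show ?thesis using steps by (simp add: nth_append)
  next
    case False
    with that have "i = length xs - 1" by simp
    then show ?thesis using xs BC by (simp add: nth_append last_conv_nth)
  qed
  then show ?thesis
    unfolding linked_by_def using xs PC by (intro exI[of _ "xs @ [C]"]) auto
qed

section \<open>Block matrices\<close>

lemma block_mat_carrier: "A' \<in> carrier_mat m m \<Longrightarrow> block_mat a b c A' \<in> carrier_mat (Suc m) (Suc m)"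
  unfolding block_mat_def using four_block_carrier_mat[of "mat 1 1 (\<lambda>_. a)" 1 1 A' m m] by simp

lemma block_mat_index:
  assumes "A' \<in> carrier_mat m m" "b \<in> carrier_vec m" "c \<in> carrier_vec m" "i < Suc m" "j < Suc m"
  shows "block_mat a b c A' $$ (i, j) =
    (if i = 0 then (if j = 0 then a else b $ (j - 1))
     else (if j = 0 then c $ (i - 1) else A' $$ (i - 1, j - 1)))"
  using assms unfolding block_mat_def by (subst index_mat_four_block) auto

lemma det_block_mat_zero_col:
  assumes A': "A' \<in> carrier_mat m m" and b: "b \<in> carrier_vec m"
  shows "det (block_mat a b (0\<^sub>v m) A') = a * det A'"
proof -
  have "mat (dim_vec (0\<^sub>v m :: 'a vec)) 1 (\<lambda>(i, j). 0\<^sub>v m $ i) = 0\<^sub>m m 1"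
    by (intro eq_matI) auto
  then show ?thesis
    unfolding block_mat_def using A' b
    by (subst det_four_block_mat_lower_left_zero_col) (auto simp: det_single)
qed

lemma mult_adj_mat_vec:
  assumes A: "A \<in> carrier_mat n n" and c: "c \<in> carrier_vec n"
  shows "A *\<^sub>v (adj_mat A *\<^sub>v c) = det A \<cdot>\<^sub>v c"
proof -
  have "A *\<^sub>v (adj_mat A *\<^sub>v c) = (A * adj_mat A) *\<^sub>v c"
    using adj_mat(1)[OF A] A c by simp
  also have "\<dots> = det A \<cdot>\<^sub>v c"
    unfolding adj_mat(2)[OF A] using c
    by (intro eq_vecI) (auto simp: scalar_prod_def if_distrib if_distribR cong: if_cong)
  finally show ?thesis .
qed

lemma block_mat_first_column_elimination:
  fixes a :: "'a::comm_ring_1"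
  assumes A': "A' \<in> carrier_mat m m" and b: "b \<in> carrier_vec m" and c: "c \<in> carrier_vec m"
  defines "M \<equiv> multcol 0 (det A') (block_mat a b c A')"
  shows "mat (Suc m) (Suc m) (\<lambda>(i, l). if l = 0
      then M $$ (i, 0) + (\<Sum>k\<in>{1..m}. - (adj_mat A' *\<^sub>v c) $ (k - 1) * M $$ (i, k))
      else M $$ (i, l))
    = block_mat (det A' * a - b \<bullet> (adj_mat A' *\<^sub>v c)) b (0\<^sub>v m) A'"
    (is "?L = ?R")
proof (rule eq_matI)
  define u where "u = adj_mat A' *\<^sub>v c"
  have u: "u \<in> carrier_vec m"
    unfolding u_def using adj_mat(1)[OF A'] c by simp
  fix i l assume "i < dim_row ?R" and "l < dim_col ?R"
  then have i: "i < Suc m" and l: "l < Suc m"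
    using carrier_matD[OF block_mat_carrier[OF A']] by auto
  have "det A' * c $ (i - 1) = (\<Sum>k<m. u $ k * A' $$ (i - 1, k))" if "0 < i"
  proof -
    have "det A' * c $ (i - 1) = (A' *\<^sub>v u) $ (i - 1)"
      using mult_adj_mat_vec[OF A' c] that i c unfolding u_def by simp
    also have "\<dots> = (\<Sum>k<m. u $ k * A' $$ (i - 1, k))"
      using that i A' u by (simp add: scalar_prod_def atLeast0LessThan ac_simps)
    finally show ?thesis .
  qed
  then show "?L $$ (i, l) = ?R $$ (i, l)"
    using i l A' b c u block_mat_carrier[OF A', of a b c] unfolding M_def u_def[symmetric]
    by (auto simp: block_mat_index sum.atLeast1_atMost_eq sum_negf scalar_prod_def
        atLeast0LessThan ac_simps)
qed (use carrier_matD[OF block_mat_carrier[OF A']] in auto)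

lemma block_mat_first_row_elimination:
  fixes s :: "'a::comm_ring_1"
  assumes A': "A' \<in> carrier_mat m m" and b: "b \<in> carrier_vec m"
  defines "M \<equiv> block_mat s b (0\<^sub>v m) A'"
  shows "mat (Suc m) (Suc m) (\<lambda>(i, l).
      if l \<in> {1..m} then s * M $$ (i, l) + - b $ (l - 1) * M $$ (i, 0) else M $$ (i, l))
    = block_mat s (0\<^sub>v m) (0\<^sub>v m) (s \<cdot>\<^sub>m A')"
    (is "?L = ?R")
proof (rule eq_matI)
  have sA': "s \<cdot>\<^sub>m A' \<in> carrier_mat m m" using A' by simp
  fix i l assume "i < dim_row ?R" and "l < dim_col ?R"
  then have "i < Suc m" "l < Suc m"
    using carrier_matD[OF block_mat_carrier[OF sA']] by auto
  then show "?L $$ (i, l) = ?R $$ (i, l)"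
    using A' b unfolding M_def by (auto simp: block_mat_index[OF A' b] block_mat_index[OF sA'])
qed (use A' carrier_matD[OF block_mat_carrier[of "s \<cdot>\<^sub>m A'" m]] in auto)

lemma sum_insert_index:
  fixes f :: "nat \<Rightarrow> 'a::ab_group_add"
  assumes "j < Suc k"
  shows "(\<Sum>s<k. f (insert_index j s)) = (\<Sum>t<Suc k. f t) - f j"
proof -
  have "(\<Sum>s<k. f (insert_index j s)) = sum f (insert_index j ` {0..<k})"
    by (subst sum.reindex[OF insert_index_inj_on]) (simp add: atLeast0LessThan)
  also have "\<dots> = sum f ({0..<Suc k} - {j})"
    using insert_index_image[OF assms] by simp
  also have "\<dots> = (\<Sum>t<Suc k. f t) - f j"
    using assms by (simp add: sum_diff1 atLeast0LessThan)
  finally show ?thesis .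
qed

section \<open>Homogeneous elements and matrices\<close>

(* The closure properties of a grading without the direct-sum condition; the constant family
   UNIV satisfies them and models the ungraded case. *)
definition grading_closed :: "(nat \<Rightarrow> 'a::comm_ring_1 set) \<Rightarrow> bool" where
  "grading_closed G \<longleftrightarrow> (\<forall>i. 0 \<in> G i \<and> (\<forall>x\<in>G i. \<forall>y\<in>G i. x + y \<in> G i \<and> - x \<in> G i)) \<and>
     (\<forall>i j. \<forall>x\<in>G i. \<forall>y\<in>G j. x * y \<in> G (i + j)) \<and> 1 \<in> G 0"

lemma grading_closed_UNIV: "grading_closed (\<lambda>_. UNIV)"
  unfolding grading_closed_def by simp

lemma grading_decomposition_unique:
  assumes G: "grading G"
    and f: "\<forall>i. f i \<in> G i" "finite S" "{i. f i \<noteq> 0} \<subseteq> S" "x = sum f S"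
    and g: "\<forall>i. g i \<in> G i" "finite T" "{i. g i \<noteq> 0} \<subseteq> T" "x = sum g T"
  shows "f = g"
proof -
  have "sum f S = (\<Sum>i\<in>{i. f i \<noteq> 0}. f i)"
    using f by (intro sum.mono_neutral_right) auto
  moreover have "sum g T = (\<Sum>i\<in>{i. g i \<noteq> 0}. g i)"
    using g by (intro sum.mono_neutral_right) auto
  moreover have "finite {i. f i \<noteq> 0}" "finite {i. g i \<noteq> 0}"
    using f g finite_subset by auto
  ultimately show ?thesis
    using G f g unfolding grading_def by metis
qed

lemma one_mem_grading_zero:
  fixes G :: "nat \<Rightarrow> 'a::idom set"
  assumes G: "grading G"
  shows "1 \<in> G 0"
proof -
  have G0: "\<And>i. 0 \<in> G i" and G_mult: "\<And>i j x y. x \<in> G i \<Longrightarrow> y \<in> G j \<Longrightarrow> x * y \<in> G (i + j)"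
    using G unfolding grading_def by blast+
  obtain f where f: "\<forall>i. f i \<in> G i" "finite {i. f i \<noteq> 0}" "1 = (\<Sum>i\<in>{i. f i \<noteq> 0}. f i)"
    using G unfolding grading_def by blast
  have "f k = 0" if k: "0 < k" for k
  proof -
    let ?S = "{i. f i \<noteq> 0}"
    (* f k is homogeneous of degree k, and f k = f k * 1 is a second decomposition of it *)
    have "(\<lambda>i. if i = k then f k else 0) = (\<lambda>i. if k \<le> i then f k * f (i - k) else 0)"
    proof (rule grading_decomposition_unique[OF G])
      show "\<forall>i. (if i = k then f k else 0) \<in> G i"
        using f(1) G0 by simp
      show "\<forall>i. (if k \<le> i then f k * f (i - k) else 0) \<in> G i"
        using f(1) G0 G_mult[of "f k" k] by (auto simp: le_iff_add)
      show "{i. (if k \<le> i then f k * f (i - k) else 0) \<noteq> 0} \<subseteq> (+) k ` ?S"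
        by (auto simp: le_iff_add split: if_splits)
      have "(\<Sum>i\<in>(+) k ` ?S. if k \<le> i then f k * f (i - k) else 0) = f k * (\<Sum>i\<in>?S. f i)"
        by (simp add: sum.reindex sum_distrib_left)
      then show "f k = (\<Sum>i\<in>(+) k ` ?S. if k \<le> i then f k * f (i - k) else 0)"
        using f(3) by simp
    qed (use f(2) in auto)
    then have "f k * f k = 0"
      using fun_cong[of _ _ "k + k"] k by fastforce
    then show ?thesis by simp
  qed
  then have "(\<Sum>i\<in>{i. f i \<noteq> 0}. f i) = (\<Sum>i\<in>{0}. f i)"
    by (intro sum.mono_neutral_cong_left) auto
  with f(3) have "f 0 = 1"
    by simp
  then show ?thesis
    using f(1) by metis
qed

lemma grading_imp_grading_closed: "grading (G :: nat \<Rightarrow> 'a::idom set) \<Longrightarrow> grading_closed G"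
  using one_mem_grading_zero[of G] unfolding grading_def grading_closed_def by blast

definition homogeneous_mat_with ::
    "(nat \<Rightarrow> 'a::comm_ring_1 set) \<Rightarrow> (nat \<Rightarrow> int) \<Rightarrow> (nat \<Rightarrow> int) \<Rightarrow> 'a mat \<Rightarrow> bool" where
  "homogeneous_mat_with G d e M \<longleftrightarrow>
     (\<forall>i < dim_row M. \<forall>j < dim_col M. M $$ (i, j) \<in> hcomp G (e j - d i))"

lemma homogeneous_mat_iff_with: "homogeneous_mat G M \<longleftrightarrow> (\<exists>d e. homogeneous_mat_with G d e M)"
  unfolding homogeneous_mat_def homogeneous_mat_with_def ..

lemma homogeneous_mat_withD:
  "homogeneous_mat_with G d e M \<Longrightarrow> i < dim_row M \<Longrightarrow> j < dim_col M \<Longrightarrow> M $$ (i, j) \<in> hcomp G (e j - d i)"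
  unfolding homogeneous_mat_with_def by blast

lemma homogeneous_mat_UNIV: "homogeneous_mat (\<lambda>_. UNIV) M"
  unfolding homogeneous_mat_def hcomp_def by (intro exI[of _ "\<lambda>_. 0"]) simp

lemma homogeneous_mat_with_swapcols:
  assumes "homogeneous_mat_with G d e M" and "j < dim_col M" "k < dim_col M"
  shows "homogeneous_mat_with G d (e(j := e k, k := e j)) (swapcols j k M)"
  using assms unfolding homogeneous_mat_with_def by auto

context
  fixes G :: "nat \<Rightarrow> 'a::comm_ring_1 set"
  assumes G: "grading_closed G"
begin

lemma hcomp_0 [simp]: "0 \<in> hcomp G k"
  using G unfolding grading_closed_def hcomp_def by auto

lemma hcomp_1: "1 \<in> hcomp G 0"
  using G unfolding grading_closed_def hcomp_def by auto

lemma hcomp_add: "x \<in> hcomp G k \<Longrightarrow> y \<in> hcomp G k \<Longrightarrow> x + y \<in> hcomp G k"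
  using G unfolding grading_closed_def hcomp_def by (auto split: if_splits)

lemma hcomp_uminus: "x \<in> hcomp G k \<Longrightarrow> - x \<in> hcomp G k"
  using G unfolding grading_closed_def hcomp_def by (auto split: if_splits)

lemma hcomp_mult:
  assumes x: "x \<in> hcomp G i" and y: "y \<in> hcomp G j"
  shows "x * y \<in> hcomp G (i + j)"
proof (cases "i < 0 \<or> j < 0")
  case True
  with x y have "x * y = 0" unfolding hcomp_def by auto
  then show ?thesis by simp
next
  case False
  with x y have "x \<in> G (nat i)" "y \<in> G (nat j)" unfolding hcomp_def by auto
  with G have "x * y \<in> G (nat i + nat j)" unfolding grading_closed_def by blast
  with False show ?thesis unfolding hcomp_def by (simp add: nat_add_distrib)
qed

lemma hcomp_sum: "(\<And>x. x \<in> I \<Longrightarrow> f x \<in> hcomp G k) \<Longrightarrow> sum f I \<in> hcomp G k"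
  by (induction I rule: infinite_finite_induct) (auto intro: hcomp_add)

lemma hcomp_prod:
  "(\<And>x. x \<in> I \<Longrightarrow> f x \<in> hcomp G (g x)) \<Longrightarrow> prod f I \<in> hcomp G (\<Sum>x\<in>I. g x)"
  by (induction I rule: infinite_finite_induct) (auto intro: hcomp_1 hcomp_mult)

lemma hcomp_det:
  assumes M: "M \<in> carrier_mat k k"
    and hM: "\<And>i j. i < k \<Longrightarrow> j < k \<Longrightarrow> M $$ (i, j) \<in> hcomp G (f j - g i)"
  shows "det M \<in> hcomp G ((\<Sum>j<k. f j) - (\<Sum>i<k. g i))"
  unfolding det_def'[OF M]
proof (rule hcomp_sum)
  fix p assume "p \<in> {p. p permutes {0..<k}}"
  then have p: "p permutes {..<k}" by (simp add: atLeast0LessThan)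
  have "(\<Sum>i<k. f (p i) - g i) = (\<Sum>j<k. f j) - (\<Sum>i<k. g i)"
    using sum.permute[OF p, of f] by (simp add: sum_subtractf comp_def)
  moreover have "(\<Prod>i<k. M $$ (i, p i)) \<in> hcomp G (\<Sum>i<k. f (p i) - g i)"
    using permutes_in_image[OF p] by (intro hcomp_prod hM) auto
  ultimately show "signof p * (\<Prod>i = 0..<k. M $$ (i, p i)) \<in> hcomp G ((\<Sum>j<k. f j) - (\<Sum>i<k. g i))"
    by (auto simp: sign_def atLeast0LessThan intro: hcomp_uminus)
qed

lemma hcomp_cofactor:
  assumes M: "M \<in> carrier_mat (Suc k) (Suc k)"
    and hM: "\<And>i j. i < Suc k \<Longrightarrow> j < Suc k \<Longrightarrow> M $$ (i, j) \<in> hcomp G (f j - g i)"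
    and i: "i < Suc k" and j: "j < Suc k"
  shows "cofactor M i j \<in> hcomp G (((\<Sum>t<Suc k. f t) - f j) - ((\<Sum>t<Suc k. g t) - g i))"
proof -
  have "det (mat_delete M i j)
      \<in> hcomp G ((\<Sum>s<k. f (insert_index j s)) - (\<Sum>r<k. g (insert_index i r)))"
  proof (rule hcomp_det)
    show "mat_delete M i j \<in> carrier_mat k k"
      using mat_delete_carrier[OF M] by simp
    fix r s assume "r < k" "s < k"
    then show "mat_delete M i j $$ (r, s) \<in> hcomp G (f (insert_index j s) - g (insert_index i r))"
      using mat_delete_index[OF M i j, of r s] hM[of "insert_index i r" "insert_index j s"]
      by (auto simp: insert_index_def)
  qed
  then show ?thesis
    unfolding cofactor_def sum_insert_index[OF i] sum_insert_index[OF j]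
    by (cases "even (i + j)") (auto intro: hcomp_uminus)
qed

lemma hcomp_adj_mult_vec:
  assumes A: "A \<in> carrier_mat k k" and c: "c \<in> carrier_vec k"
    and hA: "\<And>i j. i < k \<Longrightarrow> j < k \<Longrightarrow> A $$ (i, j) \<in> hcomp G (f j - g i)"
    and hc: "\<And>i. i < k \<Longrightarrow> c $ i \<in> hcomp G (h - g i)" and j: "j < k"
  shows "(adj_mat A *\<^sub>v c) $ j \<in> hcomp G (h + ((\<Sum>t<k. f t) - (\<Sum>t<k. g t)) - f j)"
proof -
  obtain k' where k: "k = Suc k'" using j by (cases k) auto
  have "(adj_mat A *\<^sub>v c) $ j = (\<Sum>i<k. cofactor A i j * c $ i)"
    using A c j by (simp add: adj_mat_def scalar_prod_def atLeast0LessThan)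
  also have "\<dots> \<in> hcomp G (h + ((\<Sum>t<k. f t) - (\<Sum>t<k. g t)) - f j)"
  proof (rule hcomp_sum)
    fix i assume "i \<in> {..<k}"
    then have "cofactor A i j * c $ i
        \<in> hcomp G ((((\<Sum>t<k. f t) - f j) - ((\<Sum>t<k. g t) - g i)) + (h - g i))"
      using A hA j unfolding k by (intro hcomp_mult hcomp_cofactor hc) (auto simp: k)
    then show "cofactor A i j * c $ i \<in> hcomp G (h + ((\<Sum>t<k. f t) - (\<Sum>t<k. g t)) - f j)"
      by (simp add: algebra_simps)
  qed
  finally show ?thesis .
qed

lemma homogeneous_mat_with_addcol:
  assumes hM: "homogeneous_mat_with G d e M" and j: "j < dim_col M"
    and t: "t \<in> hcomp G (e k - e j)"
  shows "homogeneous_mat_with G d e (addcol t k j M)"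
  unfolding homogeneous_mat_with_def
proof (intro allI impI)
  fix i l assume i: "i < dim_row (addcol t k j M)" and l: "l < dim_col (addcol t k j M)"
  have "t * M $$ (i, j) \<in> hcomp G ((e k - e j) + (e j - d i))"
    using i j hM by (intro hcomp_mult t) (auto dest: homogeneous_mat_withD)
  then show "addcol t k j M $$ (i, l) \<in> hcomp G (e l - d i)"
    using i l hM by (auto intro: hcomp_add dest: homogeneous_mat_withD)
qed

lemma homogeneous_mat_with_multcol:
  assumes hM: "homogeneous_mat_with G d e M" and s: "s \<in> hcomp G \<delta>"
  shows "homogeneous_mat_with G d (e(k := e k + \<delta>)) (multcol k s M)"
  unfolding homogeneous_mat_with_def
proof (intro allI impI)
  fix i l assume i: "i < dim_row (multcol k s M)" and l: "l < dim_col (multcol k s M)"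
  have "s * M $$ (i, l) \<in> hcomp G (\<delta> + (e l - d i))"
    using i l hM by (intro hcomp_mult s) (auto dest: homogeneous_mat_withD)
  then show "multcol k s M $$ (i, l) \<in> hcomp G ((e(k := e k + \<delta>)) l - d i)"
    using i l hM by (auto simp: algebra_simps dest: homogeneous_mat_withD)
qed

end

section \<open>Homogeneous linking\<close>

definition homogeneously_linked :: "(nat \<Rightarrow> 'a::comm_ring_1 set) \<Rightarrow> nat \<Rightarrow> 'a mat \<Rightarrow>
    (nat \<Rightarrow> int) \<Rightarrow> (nat \<Rightarrow> int) \<Rightarrow> 'a mat \<Rightarrow> bool" where
  "homogeneously_linked G n A d e M \<longleftrightarrow> M \<in> carrier_mat n n \<and> det M \<noteq> 0 \<and>
     homogeneous_mat_with G d e M \<and> linked_by (homogeneous_mat G) n A M"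

lemma homogeneously_linked_refl:
  "M \<in> carrier_mat n n \<Longrightarrow> det M \<noteq> 0 \<Longrightarrow> homogeneous_mat_with G d e M \<Longrightarrow>
    homogeneously_linked G n M d e M"
  unfolding homogeneously_linked_def homogeneous_mat_iff_with by (blast intro: linked_by_refl)

lemma homogeneously_linked_index:
  "homogeneously_linked G n A d e M \<Longrightarrow> i < n \<Longrightarrow> j < n \<Longrightarrow> M $$ (i, j) \<in> hcomp G (e j - d i)"
  unfolding homogeneously_linked_def homogeneous_mat_with_def by auto

context
  fixes G :: "nat \<Rightarrow> 'a::idom set"
  assumes G: "grading_closed G"
begin

lemma homogeneously_linked_multcol:
  assumes M: "homogeneously_linked G n A d e M" and k: "k < n"
    and s: "s \<noteq> 0" "s \<in> hcomp G \<delta>"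
  shows "homogeneously_linked G n A d (e(k := e k + \<delta>)) (multcol k s M)"
proof -
  from M have M_carrier: "M \<in> carrier_mat n n" and dM: "det M \<noteq> 0"
    and hM: "homogeneous_mat_with G d e M" and linked_M: "linked_by (homogeneous_mat G) n A M"
    unfolding homogeneously_linked_def by auto
  have "multcol k s M \<in> carrier_mat n n"
    using carrier_matD[OF M_carrier] by (auto intro!: carrier_matI)
  moreover have "det (multcol k s M) \<noteq> 0"
    using dM s(1) by (simp add: det_multcol[OF M_carrier k])
  moreover have hS: "homogeneous_mat_with G d (e(k := e k + \<delta>)) (multcol k s M)"
    by (rule homogeneous_mat_with_multcol[OF G hM s(2)])
  moreover have "linked_by (homogeneous_mat G) n A (multcol k s M)"
    using linked_by_snoc[OF linked_M linked_one_step_multcol[OF M_carrier dM k s(1)]] hS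
    unfolding homogeneous_mat_iff_with by blast
  ultimately show ?thesis
    unfolding homogeneously_linked_def by blast
qed

lemma homogeneously_linked_addcol:
  assumes M: "homogeneously_linked G n A d e M" and jk: "j < n" "k < n" "j \<noteq> k"
    and t: "t \<in> hcomp G (e k - e j)"
  shows "homogeneously_linked G n A d e (addcol t k j M)"
proof -
  let ?X = "swapcols j k (addcol t k j M)"
  from M have M_carrier: "M \<in> carrier_mat n n" and dM: "det M \<noteq> 0"
    and hM: "homogeneous_mat_with G d e M" and linked_M: "linked_by (homogeneous_mat G) n A M"
    unfolding homogeneously_linked_def by auto
  have A_carrier: "addcol t k j M \<in> carrier_mat n n" and X: "?X \<in> carrier_mat n n"
    using carrier_matD[OF M_carrier] by (auto intro!: carrier_matI)
  have dA: "det (addcol t k j M) \<noteq> 0"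
    using det_addcol[OF jk(1) jk(3)[symmetric] M_carrier] dM by simp
  have dX: "det ?X \<noteq> 0"
    using det_swapcols[OF jk A_carrier] dA by simp
  have hA: "homogeneous_mat_with G d e (addcol t k j M)"
    by (rule homogeneous_mat_with_addcol[OF G hM _ t]) (use M_carrier jk in auto)
  have hX: "homogeneous_mat_with G d (e(j := e k, k := e j)) ?X"
    by (rule homogeneous_mat_with_swapcols[OF hA]) (use A_carrier jk in auto)
  have linked_X: "linked_by (homogeneous_mat G) n A ?X"
    using linked_by_snoc[OF linked_M linked_one_step_addcol_swapcols[OF M_carrier dM jk]] hX
    unfolding homogeneous_mat_iff_with by blast
  have "swapcols j k ?X = addcol t k j M"
    using M_carrier jk by (intro eq_matI) auto
  then have "linked_by (homogeneous_mat G) n A (addcol t k j M)"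
    using linked_by_snoc[OF linked_X linked_one_step_swapcols[OF X dX jk]] hA
    unfolding homogeneous_mat_iff_with by auto
  with A_carrier dA hA show ?thesis
    unfolding homogeneously_linked_def by blast
qed

lemma homogeneously_linked_add_column_combination:
  assumes M: "homogeneously_linked G n A d e M" and j: "j < n" and K: "K \<subseteq> {..<n} - {j}"
    and t: "\<And>k. k \<in> K \<Longrightarrow> t k \<in> hcomp G (e j - e k)"
  shows "homogeneously_linked G n A d e
    (mat n n (\<lambda>(i, l). if l = j then M $$ (i, j) + (\<Sum>k\<in>K. t k * M $$ (i, k)) else M $$ (i, l)))"
proof -
  have M_carrier: "M \<in> carrier_mat n n"
    using M unfolding homogeneously_linked_def by auto
  have "homogeneously_linked G n A d e
    (mat n n (\<lambda>(i, l). if l = j then M $$ (i, j) + (\<Sum>k\<in>F. t k * M $$ (i, k)) else M $$ (i, l)))"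
    if "finite F" "F \<subseteq> K" for F
    using that
  proof (induction F rule: finite_subset_induct')
    case empty
    have "mat n n (\<lambda>(i, l). if l = j then M $$ (i, j) + (\<Sum>k\<in>{}. t k * M $$ (i, k))
        else M $$ (i, l)) = M"
      using M_carrier by (intro eq_matI) auto
    then show ?case using M by (simp only:)
  next
    case (insert a F)
    let ?MF = "mat n n (\<lambda>(i, l). if l = j then M $$ (i, j) + (\<Sum>k\<in>F. t k * M $$ (i, k)) else M $$ (i, l))"
    have a: "a < n" "a \<noteq> j" using insert.hyps K by auto
    have "homogeneously_linked G n A d e (addcol (t a) j a ?MF)"
      using homogeneously_linked_addcol[OF insert.IH a(1) j a(2) t] insert.hyps by simp
    moreover have "addcol (t a) j a ?MF = mat n n (\<lambda>(i, l). if l = j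
        then M $$ (i, j) + (\<Sum>k\<in>insert a F. t k * M $$ (i, k)) else M $$ (i, l))"
      using insert.hyps a by (intro eq_matI) (auto simp: algebra_simps)
    ultimately show ?case by simp
  qed
  moreover have "finite K" using K finite_subset by blast
  ultimately show ?thesis by blast
qed

lemma homogeneously_linked_scale_add_columns:
  assumes M: "homogeneously_linked G n A d e M" and j: "j < n" and J: "J \<subseteq> {..<n} - {j}"
    and s: "s \<noteq> 0" "s \<in> hcomp G \<sigma>" and t: "\<And>l. l \<in> J \<Longrightarrow> t l \<in> hcomp G (e l + \<sigma> - e j)"
  shows "homogeneously_linked G n A d (\<lambda>l. if l \<in> J then e l + \<sigma> else e l)
    (mat n n (\<lambda>(i, l). if l \<in> J then s * M $$ (i, l) + t l * M $$ (i, j) else M $$ (i, l)))"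
proof -
  have M_carrier: "M \<in> carrier_mat n n"
    using M unfolding homogeneously_linked_def by auto
  have "homogeneously_linked G n A d (\<lambda>l. if l \<in> F then e l + \<sigma> else e l)
    (mat n n (\<lambda>(i, l). if l \<in> F then s * M $$ (i, l) + t l * M $$ (i, j) else M $$ (i, l)))"
    if "finite F" "F \<subseteq> J" for F
    using that
  proof (induction F rule: finite_subset_induct')
    case empty
    have "mat n n (\<lambda>(i, l). if l \<in> {} then s * M $$ (i, l) + t l * M $$ (i, j) else M $$ (i, l)) = M"
      using M_carrier by (intro eq_matI) auto
    then show ?case using M by simp
  next
    case (insert a F)
    let ?eF = "\<lambda>l. if l \<in> F then e l + \<sigma> else e l"
    let ?MF = "mat n n (\<lambda>(i, l). if l \<in> F then s * M $$ (i, l) + t l * M $$ (i, j) else M $$ (i, l))"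
    have a: "a < n" "a \<noteq> j" using insert.hyps J by auto
    let ?e = "\<lambda>l. if l \<in> insert a F then e l + \<sigma> else e l"
    have "?eF(a := ?eF a + \<sigma>) = ?e"
      using insert.hyps by auto
    then have "homogeneously_linked G n A d ?e (multcol a s ?MF)"
      using homogeneously_linked_multcol[OF insert.IH a(1) s] by simp
    moreover have "t a \<in> hcomp G (?e a - ?e j)"
      using t[of a] insert.hyps J by auto
    ultimately have "homogeneously_linked G n A d ?e (addcol (t a) a j (multcol a s ?MF))"
      by (rule homogeneously_linked_addcol[OF _ j a(1) a(2)[symmetric]])
    moreover have "addcol (t a) a j (multcol a s ?MF) = mat n n (\<lambda>(i, l). if l \<in> insert a F
        then s * M $$ (i, l) + t l * M $$ (i, j) else M $$ (i, l))"
      using insert.hyps a J j by (intro eq_matI) (auto simp: algebra_simps)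
    ultimately show ?case by simp
  qed
  moreover have "finite J" using J finite_subset by blast
  ultimately show ?thesis by blast
qed

lemma homogeneously_linked_clear_first_column:
  assumes A': "A' \<in> carrier_mat m m" and b: "b \<in> carrier_vec m" and c: "c \<in> carrier_vec m"
    and dA': "det A' \<noteq> 0" and M: "homogeneously_linked G (Suc m) A0 d e (block_mat a b c A')"
  shows "homogeneously_linked G (Suc m) A0 d (e(0 := e 0 + ((\<Sum>j<m. e (Suc j)) - (\<Sum>i<m. d (Suc i)))))
    (block_mat (det A' * a - b \<bullet> (adj_mat A' *\<^sub>v c)) b (0\<^sub>v m) A')"
proof -
  let ?A = "block_mat a b c A'" and ?u = "adj_mat A' *\<^sub>v c"
  let ?M = "multcol 0 (det A') ?A"
  define \<delta> where "\<delta> = (\<Sum>j<m. e (Suc j)) - (\<Sum>i<m. d (Suc i))"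
  have hA': "A' $$ (i, j) \<in> hcomp G (e (Suc j) - d (Suc i))" if "i < m" "j < m" for i j
    using homogeneously_linked_index[OF M, of "Suc i" "Suc j"] block_mat_index[OF A' b c] that by simp
  have hc: "c $ i \<in> hcomp G (e 0 - d (Suc i))" if "i < m" for i
    using homogeneously_linked_index[OF M, of "Suc i" 0] block_mat_index[OF A' b c] that by simp
  have "homogeneously_linked G (Suc m) A0 d (e(0 := e 0 + \<delta>)) ?M"
    unfolding \<delta>_def using hcomp_det[OF G A' hA'] dA'
    by (intro homogeneously_linked_multcol[OF M]) auto
  then have "homogeneously_linked G (Suc m) A0 d (e(0 := e 0 + \<delta>)) (mat (Suc m) (Suc m) (\<lambda>(i, l).
      if l = 0 then ?M $$ (i, 0) + (\<Sum>k\<in>{1..m}. - ?u $ (k - 1) * ?M $$ (i, k)) else ?M $$ (i, l)))"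
  proof (rule homogeneously_linked_add_column_combination)
    fix k assume "k \<in> {1..m}"
    then show "- ?u $ (k - 1) \<in> hcomp G ((e(0 := e 0 + \<delta>)) 0 - (e(0 := e 0 + \<delta>)) k)"
      using hcomp_adj_mult_vec[OF G A' c hA' hc, of "k - 1"] unfolding \<delta>_def
      by (auto intro: hcomp_uminus[OF G])
  qed auto
  then show ?thesis
    unfolding block_mat_first_column_elimination[OF A' b c] \<delta>_def .
qed

lemma homogeneously_linked_clear_first_row:
  assumes A': "A' \<in> carrier_mat m m" and b: "b \<in> carrier_vec m" and s: "s \<noteq> 0"
    and M: "homogeneously_linked G (Suc m) A0 d e (block_mat s b (0\<^sub>v m) A')"
  shows "homogeneously_linked G (Suc m) A0 d (\<lambda>l. if l \<in> {1..m} then e l + (e 0 - d 0) else e l)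
    (block_mat s (0\<^sub>v m) (0\<^sub>v m) (s \<cdot>\<^sub>m A'))"
proof -
  let ?A = "block_mat s b (0\<^sub>v m) A'"
  have first_row: "?A $$ (0, l) \<in> hcomp G (e l - d 0)" if "l < Suc m" for l
    using homogeneously_linked_index[OF M, of 0 l] that by simp
  have "homogeneously_linked G (Suc m) A0 d (\<lambda>l. if l \<in> {1..m} then e l + (e 0 - d 0) else e l)
    (mat (Suc m) (Suc m) (\<lambda>(i, l).
      if l \<in> {1..m} then s * ?A $$ (i, l) + - b $ (l - 1) * ?A $$ (i, 0) else ?A $$ (i, l)))"
  proof (rule homogeneously_linked_scale_add_columns[OF M])
    show "s \<in> hcomp G (e 0 - d 0)"
      using first_row[of 0] A' b by (simp add: block_mat_index)
    fix l assume "l \<in> {1..m}"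
    then show "- b $ (l - 1) \<in> hcomp G (e l + (e 0 - d 0) - e 0)"
      using first_row[of l] A' b by (auto simp: block_mat_index intro: hcomp_uminus[OF G])
  qed (use s in auto)
  then show ?thesis
    unfolding block_mat_first_row_elimination[OF A' b] .
qed

lemma linked_to_block_diagonal:
  assumes A': "A' \<in> carrier_mat m m" and b: "b \<in> carrier_vec m" and c: "c \<in> carrier_vec m"
    and dA: "det (block_mat a b c A') \<noteq> 0" and dA': "det A' \<noteq> 0"
    and hA: "homogeneous_mat G (block_mat a b c A')"
  shows "\<exists>s. homogeneous_mat G (block_mat s (0\<^sub>v m) (0\<^sub>v m) (s \<cdot>\<^sub>m A')) \<and>
    linked_by (homogeneous_mat G) (Suc m) (block_mat a b c A') (block_mat s (0\<^sub>v m) (0\<^sub>v m) (s \<cdot>\<^sub>m A'))"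
proof -
  let ?A = "block_mat a b c A'" and ?s = "det A' * a - b \<bullet> (adj_mat A' *\<^sub>v c)"
  obtain d e where "homogeneous_mat_with G d e ?A"
    using hA unfolding homogeneous_mat_iff_with by blast
  then have "homogeneously_linked G (Suc m) ?A d e ?A"
    using block_mat_carrier[OF A'] dA by (intro homogeneously_linked_refl)
  then obtain e' where first_column:
    "homogeneously_linked G (Suc m) ?A d e' (block_mat ?s b (0\<^sub>v m) A')"
    using homogeneously_linked_clear_first_column[OF A' b c dA'] by blast
  then have "?s \<noteq> 0"
    unfolding homogeneously_linked_def det_block_mat_zero_col[OF A' b] by simp
  then obtain e'' where
    "homogeneously_linked G (Suc m) ?A d e'' (block_mat ?s (0\<^sub>v m) (0\<^sub>v m) (?s \<cdot>\<^sub>m A'))"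
    using homogeneously_linked_clear_first_row[OF A' b _ first_column] by blast
  then show ?thesis
    unfolding homogeneously_linked_def homogeneous_mat_iff_with by blast
qed

end

theorem lemma7p6:
  fixes a :: "'a::idom" and b c :: "'a vec" and A' :: "'a mat" and m :: nat
  assumes "A' \<in> carrier_mat m m" and "b \<in> carrier_vec m" and "c \<in> carrier_vec m"
    and "det (block_mat a b c A') \<noteq> 0" and "det A' \<noteq> 0"
    and "b \<noteq> 0\<^sub>v m" and "c \<noteq> 0\<^sub>v m"
  shows "(\<exists>b0 B'. B' \<in> carrier_mat m m \<and>
            linked (m + 1) (block_mat a b c A') (block_mat b0 (0\<^sub>v m) (0\<^sub>v m) B'))
       \<and> (\<forall>G. grading G \<and> G 1 \<noteq> {0} \<and> homogeneous_mat G (block_mat a b c A') \<longrightarrow>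
            (\<exists>b0 B'. B' \<in> carrier_mat m m \<and>
               homogeneous_mat G (block_mat b0 (0\<^sub>v m) (0\<^sub>v m) B') \<and>
               linked_by (homogeneous_mat G) (m + 1) (block_mat a b c A')
                  (block_mat b0 (0\<^sub>v m) (0\<^sub>v m) B')))"
proof -
  have block_diagonal: "\<exists>b0 B'. B' \<in> carrier_mat m m \<and>
      homogeneous_mat G (block_mat b0 (0\<^sub>v m) (0\<^sub>v m) B') \<and>
      linked_by (homogeneous_mat G) (m + 1) (block_mat a b c A') (block_mat b0 (0\<^sub>v m) (0\<^sub>v m) B')"
    if "grading_closed G" "homogeneous_mat G (block_mat a b c A')" for G :: "nat \<Rightarrow> 'a set"
    using linked_to_block_diagonal[OF that(1) assms(1-5) that(2)] assms(1)
    by (metis Suc_eq_plus1 smult_carrier_mat)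
  have "homogeneous_mat (\<lambda>_. UNIV :: 'a set) = (\<lambda>_. True)"
    using homogeneous_mat_UNIV by blast
  then show ?thesis
    using block_diagonal[OF grading_closed_UNIV homogeneous_mat_UNIV] block_diagonal
      grading_imp_grading_closed by auto
qed

end
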